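(* Let $\mathcal{U}=\begin{pmatrix}\mathcal{A}&\mathcal{M}\\ \mathcal{N}&\mathcal{B}\end{pmatrix}$ be a generalized matrix ring in which $\mathcal{A}$ and $\mathcal{B}$ are 2-torsion free. Let $\phi:\mathcal{U}\to\mathcal{U}$ be an additive mapping satisfying condition $(\mathbb{P})$, i.e. for all $U,V\in\mathcal{U}$ with $UV=VU=0$ one has $\phi(U)\circ V+U\circ\phi(V)=0$. Then there exist a Jordan derivation $\delta:\mathcal{U}\to\mathcal{U}$ and a multiplier $\eta:\mathcal{U}\to\mathcal{U}$ such that $\phi=\delta+\eta$. Moreover, if $\phi(I)=0$, then $\phi$ is a Jordan derivation.
   Context: A generalized matrix ring is built from: unital rings $\mathcal{A},\mathcal{B}$; a unital $(\mathcal{A},\mathcal{B})$-bimodule $\mathcal{M}$ which is faithful on both sides (if $A\in\mathcal{A}$ and $A\mathcal{M}=\{0\}$ then $A=0$; if $B\in\mathcal{B}$ and $\mathcal{M}B=\{0\}$ then $B=0$); a unital $(\mathcal{B},\mathcal{A})$-bimodule $\mathcal{N}$ (not necessarily faithful); and bimodule homomorphisms $\sigma:\mathcal{M}\otimes_{\mathcal{B}}\mathcal{N}\to\mathcal{A}$, $\rho:\mathcal{N}\otimes_{\mathcal{A}}\mathcal{M}\to\mathcal{B}$, written $MN=\sigma(M\otimes N)$, $NM=\rho(N\otimes M)$, satisfying $(MN)M'=M(NM')$ and $(NM)N'=N(MN')$ for all $M,M'\in\mathcal{M}$, $N,N'\in\mathcal{N}$. Then $\mathcal{U}$ is the set of matrices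 $\begin{pmatrix}A&M\\N&B\end{pmatrix}$ ($A\in\mathcal{A},M\in\mathcal{M},N\in\mathcal{N},B\in\mathcal{B}$) with the usual matrix addition and multiplication; it has identity $I$. A ring is 2-torsion free if $2X=0$ implies $X=0$. The Jordan product is $X\circ Y=XY+YX$. For a unital ring $\mathcal{R}$: an additive map $\delta:\mathcal{R}\to\mathcal{R}$ is a Jordan derivation if $\delta(X^2)=\delta(X)X+X\delta(X)$ for all $X$; an additive map $\eta:\mathcal{R}\to\mathcal{R}$ is a multiplier if $\eta(X)=\eta(I)X=X\eta(I)$ for all $X\in\mathcal{R}$. *)

theory Defs
  imports Main "HOL-Library.Product_Plus"
begin

text \<open>Data of a generalized matrix ring: the ring A is the type 'a, B is 'b,
  the bimodules M, N are the types 'm, 'n; the record holds the module actions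
  and the pairings sigma : M x N -> A, rho : N x M -> B.\<close>

record ('a, 'm, 'n, 'b) gmr =
  actAM :: "'a \<Rightarrow> 'm \<Rightarrow> 'm"
  actMB :: "'m \<Rightarrow> 'b \<Rightarrow> 'm"
  actBN :: "'b \<Rightarrow> 'n \<Rightarrow> 'n"
  actNA :: "'n \<Rightarrow> 'a \<Rightarrow> 'n"
  sig   :: "'m \<Rightarrow> 'n \<Rightarrow> 'a"
  rho   :: "'n \<Rightarrow> 'm \<Rightarrow> 'b"

definition gen_matrix_ring ::
  "('a::ring_1, 'm::ab_group_add, 'n::ab_group_add, 'b::ring_1) gmr \<Rightarrow> bool" where
  "gen_matrix_ring R \<longleftrightarrow>
     \<comment> \<open>M is a unital (A,B)-bimodule\<close>
     (\<forall>a a' m. actAM R (a + a') m = actAM R a m + actAM R a' m) \<and>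
     (\<forall>a m m'. actAM R a (m + m') = actAM R a m + actAM R a m') \<and>
     (\<forall>a a' m. actAM R (a * a') m = actAM R a (actAM R a' m)) \<and>
     (\<forall>m. actAM R 1 m = m) \<and>
     (\<forall>m b b'. actMB R m (b + b') = actMB R m b + actMB R m b') \<and>
     (\<forall>m m' b. actMB R (m + m') b = actMB R m b + actMB R m' b) \<and>
     (\<forall>m b b'. actMB R m (b * b') = actMB R (actMB R m b) b') \<and>
     (\<forall>m. actMB R m 1 = m) \<and>
     (\<forall>a m b. actAM R a (actMB R m b) = actMB R (actAM R a m) b) \<and>
     \<comment> \<open>N is a unital (B,A)-bimodule\<close>
     (\<forall>b b' n. actBN R (b + b') n = actBN R b n + actBN R b' n) \<and>
     (\<forall>b n n'. actBN R b (n + n') = actBN R b n + actBN R b n') \<and>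
     (\<forall>b b' n. actBN R (b * b') n = actBN R b (actBN R b' n)) \<and>
     (\<forall>n. actBN R 1 n = n) \<and>
     (\<forall>n a a'. actNA R n (a + a') = actNA R n a + actNA R n a') \<and>
     (\<forall>n n' a. actNA R (n + n') a = actNA R n a + actNA R n' a) \<and>
     (\<forall>n a a'. actNA R n (a * a') = actNA R (actNA R n a) a') \<and>
     (\<forall>n. actNA R n 1 = n) \<and>
     (\<forall>b n a. actBN R b (actNA R n a) = actNA R (actBN R b n) a) \<and>
     \<comment> \<open>M faithful on both sides\<close>
     (\<forall>a. (\<forall>m. actAM R a m = 0) \<longrightarrow> a = 0) \<and>
     (\<forall>b. (\<forall>m. actMB R m b = 0) \<longrightarrow> b = 0) \<and>
     \<comment> \<open>sigma : M \<otimes>_B N \<rightarrow> A is an (A,A)-bimodule homomorphism\<close>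
     (\<forall>m m' n. sig R (m + m') n = sig R m n + sig R m' n) \<and>
     (\<forall>m n n'. sig R m (n + n') = sig R m n + sig R m n') \<and>
     (\<forall>m b n. sig R (actMB R m b) n = sig R m (actBN R b n)) \<and>
     (\<forall>a m n. sig R (actAM R a m) n = a * sig R m n) \<and>
     (\<forall>m n a. sig R m (actNA R n a) = sig R m n * a) \<and>
     \<comment> \<open>rho : N \<otimes>_A M \<rightarrow> B is a (B,B)-bimodule homomorphism\<close>
     (\<forall>n n' m. rho R (n + n') m = rho R n m + rho R n' m) \<and>
     (\<forall>n m m'. rho R n (m + m') = rho R n m + rho R n m') \<and>
     (\<forall>n a m. rho R (actNA R n a) m = rho R n (actAM R a m)) \<and>
     (\<forall>b n m. rho R (actBN R b n) m = b * rho R n m) \<and>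
     (\<forall>n m b. rho R n (actMB R m b) = rho R n m * b) \<and>
     \<comment> \<open>(MN)M' = M(NM') and (NM)N' = N(MN')\<close>
     (\<forall>m n m'. actAM R (sig R m n) m' = actMB R m (rho R n m')) \<and>
     (\<forall>n m n'. actBN R (rho R n m) n' = actNA R n (sig R m n'))"

text \<open>Elements of U are quadruples (A, M, N, B), i.e. matrices [[A, M], [N, B]];
  addition is componentwise (product instance of ab_group_add).\<close>

fun gm_mult :: "('a::ring_1, 'm::ab_group_add, 'n::ab_group_add, 'b::ring_1) gmr \<Rightarrow>
    'a \<times> 'm \<times> 'n \<times> 'b \<Rightarrow> 'a \<times> 'm \<times> 'n \<times> 'b \<Rightarrow> 'a \<times> 'm \<times> 'n \<times> 'b" where
  "gm_mult R (a, m, n, b) (a', m', n', b') =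
     (a * a' + sig R m n',
      actAM R a m' + actMB R m b',
      actNA R n a' + actBN R b n',
      rho R n m' + b * b')"

definition gm_one :: "'a::ring_1 \<times> 'm::ab_group_add \<times> 'n::ab_group_add \<times> 'b::ring_1" where
  "gm_one = (1, 0, 0, 1)"

definition gm_jordan ::
  "('a::ring_1, 'm::ab_group_add, 'n::ab_group_add, 'b::ring_1) gmr \<Rightarrow>
    'a \<times> 'm \<times> 'n \<times> 'b \<Rightarrow> 'a \<times> 'm \<times> 'n \<times> 'b \<Rightarrow> 'a \<times> 'm \<times> 'n \<times> 'b" where
  "gm_jordan R X Y = gm_mult R X Y + gm_mult R Y X"

definition two_torsion_free :: "'r::ab_group_add itself \<Rightarrow> bool" where
  "two_torsion_free _ \<longleftrightarrow> (\<forall>x::'r. x + x = 0 \<longrightarrow> x = 0)"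

definition additive_map :: "('u::ab_group_add \<Rightarrow> 'u) \<Rightarrow> bool" where
  "additive_map f \<longleftrightarrow> (\<forall>x y. f (x + y) = f x + f y)"

definition jordan_derivation ::
  "('a::ring_1, 'm::ab_group_add, 'n::ab_group_add, 'b::ring_1) gmr \<Rightarrow>
    ('a \<times> 'm \<times> 'n \<times> 'b \<Rightarrow> 'a \<times> 'm \<times> 'n \<times> 'b) \<Rightarrow> bool" where
  "jordan_derivation R d \<longleftrightarrow> additive_map d \<and>
     (\<forall>X. d (gm_mult R X X) = gm_mult R (d X) X + gm_mult R X (d X))"

definition multiplier ::
  "('a::ring_1, 'm::ab_group_add, 'n::ab_group_add, 'b::ring_1) gmr \<Rightarrow>
    ('a \<times> 'm \<times> 'n \<times> 'b \<Rightarrow> 'a \<times> 'm \<times> 'n \<times> 'b) \<Rightarrow> bool" where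
  "multiplier R e \<longleftrightarrow> additive_map e \<and>
     (\<forall>X. e X = gm_mult R (e gm_one) X \<and> e X = gm_mult R X (e gm_one))"

definition condition_P ::
  "('a::ring_1, 'm::ab_group_add, 'n::ab_group_add, 'b::ring_1) gmr \<Rightarrow>
    ('a \<times> 'm \<times> 'n \<times> 'b \<Rightarrow> 'a \<times> 'm \<times> 'n \<times> 'b) \<Rightarrow> bool" where
  "condition_P R f \<longleftrightarrow> (\<forall>U V. gm_mult R U V = 0 \<and> gm_mult R V U = 0 \<longrightarrow>
       gm_jordan R (f U) V + gm_jordan R U (f V) = 0)"

end

theory Submission
  imports Defs HOL.Modules
begin

text \<open>Write P = (1,0;0,0) and Q = (0,0;0,1). Condition (P) on the orthogonal pair P, Q shows that
  after subtracting an inner derivation X \<mapsto> T X - X T the map \<psi> sends P to d1 P and Q to d2 Q.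
  Further orthogonal pairs, such as (a, a m; 0, 0) with (0, -m b; 0, b), show that \<psi> respects the
  block structure (diagonal blocks to diagonal blocks, M and N to the off-diagonal blocks) and that
  d1 m = m d2 and n d1 = d2 n; by faithfulness of M the matrix D = (d1,0;0,d2) is central, so
  \<psi> - D(-) is again a (P)-map, now vanishing at P and Q. For such a map faithfulness makes the
  corner entries derivations of A and B, and (P) applied to an idempotent E and to I - E gives
  2 \<psi>(E) = 2 (\<psi>(E) E + E \<psi>(E)). Evaluated on the idempotents (1 - m n, m; n - (n m) n, n m) and
  cancelling the factor 2 in the corners A and B (U itself need not be 2-torsion free), this
  yields \<psi>(m n) = \<psi>(m) n + m \<psi>(n) there, after which \<psi>(X X) = \<psi>(X) X + X \<psi>(X) is a direct
  computation.\<close>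

lemma additive_map_iff_additive: "additive_map f \<longleftrightarrow> additive f"
  by (simp add: additive_map_def additive_def)

lemma two_torsion_freeD: "two_torsion_free TYPE('r::ab_group_add) \<Longrightarrow> (x::'r) + x = 0 \<Longrightarrow> x = 0"
  unfolding two_torsion_free_def by blast

locale gm_ring =
  fixes R :: "('a::ring_1, 'm::ab_group_add, 'n::ab_group_add, 'b::ring_1) gmr"
  assumes gmr: "gen_matrix_ring R"
begin

lemma
  shows AM_add_left[simp]: "actAM R (a + a') m = actAM R a m + actAM R a' m"
    and AM_add_right[simp]: "actAM R a (m + m') = actAM R a m + actAM R a m'"
    and AM_mult[simp]: "actAM R (a * a') m = actAM R a (actAM R a' m)"
    and AM_one[simp]: "actAM R 1 m = m"
    and MB_add_right[simp]: "actMB R m (b + b') = actMB R m b + actMB R m b'"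
    and MB_add_left[simp]: "actMB R (m + m') b = actMB R m b + actMB R m' b"
    and MB_mult[simp]: "actMB R m (b * b') = actMB R (actMB R m b) b'"
    and MB_one[simp]: "actMB R m 1 = m"
    and AM_MB_assoc[simp]: "actAM R a (actMB R m b) = actMB R (actAM R a m) b"
    and BN_add_left[simp]: "actBN R (b + b') n = actBN R b n + actBN R b' n"
    and BN_add_right[simp]: "actBN R b (n + n') = actBN R b n + actBN R b n'"
    and BN_mult[simp]: "actBN R (b * b') n = actBN R b (actBN R b' n)"
    and BN_one[simp]: "actBN R 1 n = n"
    and NA_add_right[simp]: "actNA R n (a + a') = actNA R n a + actNA R n a'"
    and NA_add_left[simp]: "actNA R (n + n') a = actNA R n a + actNA R n' a"
    and NA_mult[simp]: "actNA R n (a * a') = actNA R (actNA R n a) a'"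
    and NA_one[simp]: "actNA R n 1 = n"
    and BN_NA_assoc[simp]: "actBN R b (actNA R n a) = actNA R (actBN R b n) a"
    and sig_add_left[simp]: "sig R (m + m') n = sig R m n + sig R m' n"
    and sig_add_right[simp]: "sig R m (n + n') = sig R m n + sig R m n'"
    and sig_MB[simp]: "sig R (actMB R m b) n = sig R m (actBN R b n)"
    and sig_AM[simp]: "sig R (actAM R a m) n = a * sig R m n"
    and sig_NA[simp]: "sig R m (actNA R n a) = sig R m n * a"
    and rho_add_left[simp]: "rho R (n + n') m = rho R n m + rho R n' m"
    and rho_add_right[simp]: "rho R n (m + m') = rho R n m + rho R n m'"
    and rho_NA[simp]: "rho R (actNA R n a) m = rho R n (actAM R a m)"
    and rho_BN[simp]: "rho R (actBN R b n) m = b * rho R n m"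
    and rho_MB[simp]: "rho R n (actMB R m b) = rho R n m * b"
    and AM_sig[simp]: "actAM R (sig R m n) m' = actMB R m (rho R n m')"
    and BN_rho[simp]: "actBN R (rho R n m) n' = actNA R n (sig R m n')"
  using gmr by (simp_all add: gen_matrix_ring_def)

lemma AM_faithful: "(\<And>m. actAM R a m = 0) \<Longrightarrow> a = 0"
  and MB_faithful: "(\<And>m. actMB R m b = 0) \<Longrightarrow> b = 0"
  using gmr by (simp_all add: gen_matrix_ring_def)

sublocale AM_right: additive "actAM R a" for a by unfold_locales simp
sublocale AM_left: additive "\<lambda>a. actAM R a m" for m by unfold_locales simp
sublocale MB_right: additive "actMB R m" for m by unfold_locales simp
sublocale MB_left: additive "\<lambda>m. actMB R m b" for b by unfold_locales simp
sublocale BN_right: additive "actBN R b" for b by unfold_locales simp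
sublocale BN_left: additive "\<lambda>b. actBN R b n" for n by unfold_locales simp
sublocale NA_right: additive "actNA R n" for n by unfold_locales simp
sublocale NA_left: additive "\<lambda>n. actNA R n a" for a by unfold_locales simp
sublocale sig_right: additive "sig R m" for m by unfold_locales simp
sublocale sig_left: additive "\<lambda>m. sig R m n" for n by unfold_locales simp
sublocale rho_right: additive "rho R n" for n by unfold_locales simp
sublocale rho_left: additive "\<lambda>n. rho R n m" for m by unfold_locales simp

lemmas [simp] =
  AM_right.zero AM_right.minus AM_right.diff AM_left.zero AM_left.minus AM_left.diff
  MB_right.zero MB_right.minus MB_right.diff MB_left.zero MB_left.minus MB_left.diff
  BN_right.zero BN_right.minus BN_right.diff BN_left.zero BN_left.minus BN_left.diff
  NA_right.zero NA_right.minus NA_right.diff NA_left.zero NA_left.minus NA_left.diff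
  sig_right.zero sig_right.minus sig_right.diff sig_left.zero sig_left.minus sig_left.diff
  rho_right.zero rho_right.minus rho_right.diff rho_left.zero rho_left.minus rho_left.diff

lemma gm_mult_add_left: "gm_mult R (X + Y) Z = gm_mult R X Z + gm_mult R Y Z"
  and gm_mult_add_right: "gm_mult R Z (X + Y) = gm_mult R Z X + gm_mult R Z Y"
  and gm_mult_assoc: "gm_mult R (gm_mult R X Y) Z = gm_mult R X (gm_mult R Y Z)"
  by (cases X; cases Y; cases Z; simp add: algebra_simps)+

lemma gm_mult_one_left[simp]: "gm_mult R gm_one X = X"
  and gm_mult_one_right[simp]: "gm_mult R X gm_one = X"
  by (cases X; simp add: gm_one_def)+

sublocale mult_left: additive "\<lambda>X. gm_mult R X Z" for Z
  by unfold_locales (rule gm_mult_add_left)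
sublocale mult_right: additive "gm_mult R Z" for Z
  by unfold_locales (rule gm_mult_add_right)

lemmas gm_mult_distribs =
  gm_mult_add_left gm_mult_add_right mult_left.diff mult_right.diff
  mult_left.minus mult_right.minus mult_left.zero mult_right.zero

lemma condition_PD:
  "condition_P R f \<Longrightarrow> gm_mult R U V = 0 \<Longrightarrow> gm_mult R V U = 0 \<Longrightarrow>
    gm_jordan R (f U) V + gm_jordan R U (f V) = 0"
  unfolding condition_P_def by blast

lemma condition_P_diff:
  assumes "condition_P R f" "condition_P R g"
  shows "condition_P R (\<lambda>X. f X - g X)"
  unfolding condition_P_def
proof (intro allI impI)
  fix U V assume "gm_mult R U V = 0 \<and> gm_mult R V U = 0"
  then have "gm_jordan R (f U) V + gm_jordan R U (f V) = 0"
    and "gm_jordan R (g U) V + gm_jordan R U (g V) = 0"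
    using assms condition_PD by blast+
  moreover have "gm_jordan R (f U - g U) V + gm_jordan R U (f V - g V)
      = (gm_jordan R (f U) V + gm_jordan R U (f V)) - (gm_jordan R (g U) V + gm_jordan R U (g V))"
    by (simp add: gm_jordan_def gm_mult_distribs algebra_simps)
  ultimately show "gm_jordan R (f U - g U) V + gm_jordan R U (f V - g V) = 0"
    by simp
qed

lemma additive_map_diff:
  "additive_map f \<Longrightarrow> additive_map g \<Longrightarrow> additive_map (\<lambda>X. f X - g X)"
  unfolding additive_map_def by (simp add: algebra_simps)

lemma jordan_derivation_add:
  assumes "jordan_derivation R f" "jordan_derivation R g"
  shows "jordan_derivation R (\<lambda>X. f X + g X)"
proof -
  have "f (gm_mult R X X) = gm_mult R (f X) X + gm_mult R X (f X)"
    and "g (gm_mult R X X) = gm_mult R (g X) X + gm_mult R X (g X)" for X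
    using assms unfolding jordan_derivation_def by blast+
  moreover have "additive_map (\<lambda>X. f X + g X)"
    using assms unfolding jordan_derivation_def additive_map_def by (simp add: algebra_simps)
  ultimately show ?thesis
    unfolding jordan_derivation_def by (simp add: gm_mult_distribs algebra_simps)
qed

lemma jordan_derivation_one:
  assumes "jordan_derivation R f"
  shows "f gm_one = 0"
proof -
  have "f (gm_mult R gm_one gm_one) = gm_mult R (f gm_one) gm_one + gm_mult R gm_one (f gm_one)"
    using assms unfolding jordan_derivation_def by blast
  then show ?thesis by simp
qed

lemma multiplier_eq_0:
  assumes "multiplier R e" "e gm_one = 0"
  shows "e X = 0"
  using assms unfolding multiplier_def by (metis mult_left.zero)

definition inner_derivation where
  "inner_derivation T X = gm_mult R T X - gm_mult R X T"

lemma inner_derivation_mult: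
  "inner_derivation T (gm_mult R X Y) =
    gm_mult R (inner_derivation T X) Y + gm_mult R X (inner_derivation T Y)"
  unfolding inner_derivation_def by (simp add: gm_mult_distribs gm_mult_assoc)

lemma additive_map_inner_derivation: "additive_map (inner_derivation T)"
  unfolding additive_map_def inner_derivation_def by (simp add: gm_mult_distribs)

lemma jordan_derivation_inner_derivation: "jordan_derivation R (inner_derivation T)"
  unfolding jordan_derivation_def
  using additive_map_inner_derivation inner_derivation_mult by blast

lemma condition_P_inner_derivation: "condition_P R (inner_derivation T)"
  unfolding condition_P_def
proof (intro allI impI)
  fix U V assume UV: "gm_mult R U V = 0 \<and> gm_mult R V U = 0"
  have "gm_jordan R (inner_derivation T U) V + gm_jordan R U (inner_derivation T V)
      = inner_derivation T (gm_mult R U V) + inner_derivation T (gm_mult R V U)"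
    by (simp add: gm_jordan_def inner_derivation_mult algebra_simps)
  with UV show "gm_jordan R (inner_derivation T U) V + gm_jordan R U (inner_derivation T V) = 0"
    by (simp add: inner_derivation_def gm_mult_distribs)
qed

lemma
  assumes central: "\<And>X. gm_mult R D X = gm_mult R X D"
  shows multiplier_central: "multiplier R (gm_mult R D)"
    and condition_P_central: "condition_P R (gm_mult R D)"
proof -
  show "multiplier R (gm_mult R D)"
    unfolding multiplier_def additive_map_def by (simp add: gm_mult_distribs central)
  show "condition_P R (gm_mult R D)"
    unfolding condition_P_def
  proof (intro allI impI)
    fix U V assume UV: "gm_mult R U V = 0 \<and> gm_mult R V U = 0"
    have "gm_mult R V (gm_mult R D U) = gm_mult R D (gm_mult R V U)"
      and "gm_mult R U (gm_mult R D V) = gm_mult R D (gm_mult R U V)"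
      by (metis central gm_mult_assoc)+
    with UV show "gm_jordan R (gm_mult R D U) V + gm_jordan R U (gm_mult R D V) = 0"
      by (simp add: gm_jordan_def gm_mult_assoc gm_mult_distribs)
  qed
qed

lemma gm_mult_idempotent:
  "gm_mult R (1 - sig R m n, m, n - actBN R (rho R n m) n, rho R n m)
     (1 - sig R m n, m, n - actBN R (rho R n m) n, rho R n m)
   = (1 - sig R m n, m, n - actBN R (rho R n m) n, rho R n m)"
  by (simp add: algebra_simps)

lemma condition_P_idempotent:
  assumes "additive_map f" "condition_P R f" "f gm_one = 0"
    and E: "gm_mult R E E = E"
  shows "f E + f E = gm_jordan R (f E) E + gm_jordan R (f E) E"
proof -
  interpret f: additive f using assms(1) by (simp add: additive_map_iff_additive)
  have "gm_mult R E (gm_one - E) = 0" "gm_mult R (gm_one - E) E = 0"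
    using E by (simp_all add: gm_mult_distribs)
  then have "gm_jordan R (f E) (gm_one - E) + gm_jordan R E (f (gm_one - E)) = 0"
    using assms(2) condition_PD by blast
  then show ?thesis
    using assms(3) by (simp add: f.diff gm_jordan_def gm_mult_distribs algebra_simps)
qed

lemma exists_inner_normalization:
  assumes "condition_P R f" "two_torsion_free TYPE('a)" "two_torsion_free TYPE('b)"
  obtains T p q where
    "f (1,0,0,0) - inner_derivation T (1,0,0,0) = (p,0,0,0)"
    "f (0,0,0,1) - inner_derivation T (0,0,0,1) = (0,0,0,q)"
proof -
  obtain p1 p2 p3 p4 where fP: "f (1,0,0,0) = (p1,p2,p3,p4)" by (metis prod.exhaust)
  obtain q1 q2 q3 q4 where fQ: "f (0,0,0,1) = (q1,q2,q3,q4)" by (metis prod.exhaust)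
  have "gm_jordan R (f (1,0,0,0)) (0,0,0,1) + gm_jordan R (1,0,0,0) (f (0,0,0,1)) = 0"
    using assms(1) condition_PD by (simp add: zero_prod_def)
  then have "q1 + q1 = 0" "p2 + q2 = 0" "p3 + q3 = 0" "p4 + p4 = 0"
    unfolding fP fQ by (simp_all add: gm_jordan_def zero_prod_def)
  then have "q1 = 0" "q2 = - p2" "q3 = - p3" "p4 = 0"
    using assms(2,3) two_torsion_freeD by (auto simp: add_eq_0_iff)
  then show ?thesis
    using that[of "(0, - p2, p3, 0)" p1 q4] fP fQ
    by (simp add: inner_derivation_def zero_prod_def)
qed

end

locale diagonal_P_map = gm_ring R
  for R :: "('a::ring_1, 'm::ab_group_add, 'n::ab_group_add, 'b::ring_1) gmr" +
  fixes \<psi> :: "'a \<times> 'm \<times> 'n \<times> 'b \<Rightarrow> 'a \<times> 'm \<times> 'n \<times> 'b"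
    and d1 :: 'a and d2 :: 'b
  assumes additive: "additive_map \<psi>"
    and condition_P: "condition_P R \<psi>"
    and torsion_free_A: "two_torsion_free TYPE('a)"
    and torsion_free_B: "two_torsion_free TYPE('b)"
    and \<psi>_P: "\<psi> (1,0,0,0) = (d1,0,0,0)"
    and \<psi>_Q: "\<psi> (0,0,0,1) = (0,0,0,d2)"
begin

sublocale \<psi>: additive \<psi>
  using additive by (simp add: additive_map_iff_additive)

lemma orthogonal_pair:
  "gm_mult R U V = 0 \<Longrightarrow> gm_mult R V U = 0 \<Longrightarrow> gm_jordan R (\<psi> U) V + gm_jordan R U (\<psi> V) = 0"
  using condition_P condition_PD by blast

lemma A_no_2_torsion: "(x::'a) + x = 0 \<Longrightarrow> x = 0"
  using torsion_free_A two_torsion_freeD by blast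

lemma B_no_2_torsion: "(x::'b) + x = 0 \<Longrightarrow> x = 0"
  using torsion_free_B two_torsion_freeD by blast

definition "A11 a = fst (\<psi> (a,0,0,0))"
definition "A12 a = fst (snd (\<psi> (a,0,0,0)))"
definition "A21 a = fst (snd (snd (\<psi> (a,0,0,0))))"
definition "A22 a = snd (snd (snd (\<psi> (a,0,0,0))))"
definition "M11 m = fst (\<psi> (0,m,0,0))"
definition "M12 m = fst (snd (\<psi> (0,m,0,0)))"
definition "M21 m = fst (snd (snd (\<psi> (0,m,0,0))))"
definition "M22 m = snd (snd (snd (\<psi> (0,m,0,0))))"
definition "N11 n = fst (\<psi> (0,0,n,0))"
definition "N12 n = fst (snd (\<psi> (0,0,n,0)))"
definition "N21 n = fst (snd (snd (\<psi> (0,0,n,0))))"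
definition "N22 n = snd (snd (snd (\<psi> (0,0,n,0))))"
definition "B11 b = fst (\<psi> (0,0,0,b))"
definition "B12 b = fst (snd (\<psi> (0,0,0,b)))"
definition "B21 b = fst (snd (snd (\<psi> (0,0,0,b))))"
definition "B22 b = snd (snd (snd (\<psi> (0,0,0,b))))"

lemma
  shows \<psi>_A_block: "\<psi> (a,0,0,0) = (A11 a, A12 a, A21 a, A22 a)"
    and \<psi>_M_block: "\<psi> (0,m,0,0) = (M11 m, M12 m, M21 m, M22 m)"
    and \<psi>_N_block: "\<psi> (0,0,n,0) = (N11 n, N12 n, N21 n, N22 n)"
    and \<psi>_B_block: "\<psi> (0,0,0,b) = (B11 b, B12 b, B21 b, B22 b)"
  by (simp_all add: A11_def A12_def A21_def A22_def M11_def M12_def M21_def M22_def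
      N11_def N12_def N21_def N22_def B11_def B12_def B21_def B22_def)

lemma \<psi>_entries:
  "\<psi> (a,m,n,b) = (A11 a + M11 m + N11 n + B11 b, A12 a + M12 m + N12 n + B12 b,
                  A21 a + M21 m + N21 n + B21 b, A22 a + M22 m + N22 n + B22 b)"
proof -
  have "(a,m,n,b) = (a,0,0,0) + (0,m,0,0) + ((0,0,n,0) + (0,0,0,b))" by simp
  then have "\<psi> (a,m,n,b) = \<psi> (a,0,0,0) + \<psi> (0,m,0,0) + (\<psi> (0,0,n,0) + \<psi> (0,0,0,b))"
    by (simp only: \<psi>.add)
  then show ?thesis by (simp add: \<psi>_A_block \<psi>_M_block \<psi>_N_block \<psi>_B_block)
qed

lemma
  shows \<psi>_A_add: "\<psi> (a + a',0,0,0) = \<psi> (a,0,0,0) + \<psi> (a',0,0,0)"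
    and \<psi>_M_add: "\<psi> (0,m + m',0,0) = \<psi> (0,m,0,0) + \<psi> (0,m',0,0)"
    and \<psi>_N_add: "\<psi> (0,0,n + n',0) = \<psi> (0,0,n,0) + \<psi> (0,0,n',0)"
    and \<psi>_B_add: "\<psi> (0,0,0,b + b') = \<psi> (0,0,0,b) + \<psi> (0,0,0,b')"
  by (simp_all flip: \<psi>.add)

sublocale A11: additive A11 by unfold_locales (simp add: A11_def \<psi>_A_add)
sublocale A12: additive A12 by unfold_locales (simp add: A12_def \<psi>_A_add)
sublocale A21: additive A21 by unfold_locales (simp add: A21_def \<psi>_A_add)
sublocale A22: additive A22 by unfold_locales (simp add: A22_def \<psi>_A_add)
sublocale M11: additive M11 by unfold_locales (simp add: M11_def \<psi>_M_add)
sublocale M12: additive M12 by unfold_locales (simp add: M12_def \<psi>_M_add)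
sublocale M21: additive M21 by unfold_locales (simp add: M21_def \<psi>_M_add)
sublocale M22: additive M22 by unfold_locales (simp add: M22_def \<psi>_M_add)
sublocale N11: additive N11 by unfold_locales (simp add: N11_def \<psi>_N_add)
sublocale N12: additive N12 by unfold_locales (simp add: N12_def \<psi>_N_add)
sublocale N21: additive N21 by unfold_locales (simp add: N21_def \<psi>_N_add)
sublocale N22: additive N22 by unfold_locales (simp add: N22_def \<psi>_N_add)
sublocale B11: additive B11 by unfold_locales (simp add: B11_def \<psi>_B_add)
sublocale B12: additive B12 by unfold_locales (simp add: B12_def \<psi>_B_add)
sublocale B21: additive B21 by unfold_locales (simp add: B21_def \<psi>_B_add)
sublocale B22: additive B22 by unfold_locales (simp add: B22_def \<psi>_B_add)

lemmas [simp] =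
  A11.zero A12.zero A21.zero A22.zero M11.zero M12.zero M21.zero M22.zero
  N11.zero N12.zero N21.zero N22.zero B11.zero B12.zero B21.zero B22.zero
  A11.minus A12.minus A21.minus A22.minus M11.minus M12.minus M21.minus M22.minus
  N11.minus N12.minus N21.minus N22.minus B11.minus B12.minus B21.minus B22.minus

lemma P_entries: "A11 1 = d1" "A12 1 = 0" "A21 1 = 0" "A22 1 = 0"
  and Q_entries: "B11 1 = 0" "B12 1 = 0" "B21 1 = 0" "B22 1 = d2"
  using \<psi>_P \<psi>_Q by (simp_all add: \<psi>_A_block \<psi>_B_block)

lemma diagonal_blocks_orthogonal:
  "a * B11 b + B11 b * a = 0" "actMB R (A12 a) b + actAM R a (B12 b) = 0"
  "actBN R b (A21 a) + actNA R (B21 b) a = 0" "A22 a * b + b * A22 a = 0"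
proof -
  have "gm_jordan R (\<psi> (a,0,0,0)) (0,0,0,b) + gm_jordan R (a,0,0,0) (\<psi> (0,0,0,b)) = 0"
    by (rule orthogonal_pair) (simp_all add: zero_prod_def)
  then show "a * B11 b + B11 b * a = 0" "actMB R (A12 a) b + actAM R a (B12 b) = 0"
    "actBN R b (A21 a) + actNA R (B21 b) a = 0" "A22 a * b + b * A22 a = 0"
    by (simp_all add: gm_jordan_def zero_prod_def \<psi>_A_block \<psi>_B_block algebra_simps)
qed

lemma B11_eq_0[simp]: "B11 b = 0"
  using A_no_2_torsion[of "B11 b"] diagonal_blocks_orthogonal(1)[where a=1] by simp
lemma A22_eq_0[simp]: "A22 a = 0"
  using B_no_2_torsion[of "A22 a"] diagonal_blocks_orthogonal(4)[where b=1] by simp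
lemma B12_eq_0[simp]: "B12 b = 0"
  using diagonal_blocks_orthogonal(2)[where a=1 and b=b] by (simp add: P_entries)
lemma A12_eq_0[simp]: "A12 a = 0"
  using diagonal_blocks_orthogonal(2)[where a=a and b=1] by simp
lemma B21_eq_0[simp]: "B21 b = 0"
  using diagonal_blocks_orthogonal(3)[where a=1 and b=b] by (simp add: P_entries)
lemma A21_eq_0[simp]: "A21 a = 0"
  using diagonal_blocks_orthogonal(3)[where a=a and b=1] by simp

lemma M21_annihilates[simp]: "sig R m (M21 m) = 0" "rho R (M21 m) m = 0"
proof -
  have "gm_jordan R (\<psi> (0,m,0,0)) (0,m,0,0) + gm_jordan R (0,m,0,0) (\<psi> (0,m,0,0)) = 0"
    by (rule orthogonal_pair) (simp_all add: zero_prod_def)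
  then have "sig R m (M21 m) + sig R m (M21 m) = 0" "rho R (M21 m) m + rho R (M21 m) m = 0"
    by (simp_all add: gm_jordan_def zero_prod_def \<psi>_M_block algebra_simps)
  then show "sig R m (M21 m) = 0" "rho R (M21 m) m = 0"
    using A_no_2_torsion[of "sig R m (M21 m)"] B_no_2_torsion[of "rho R (M21 m) m"] by simp_all
qed

lemma N12_annihilates[simp]: "sig R (N12 n) n = 0" "rho R n (N12 n) = 0"
proof -
  have "gm_jordan R (\<psi> (0,0,n,0)) (0,0,n,0) + gm_jordan R (0,0,n,0) (\<psi> (0,0,n,0)) = 0"
    by (rule orthogonal_pair) (simp_all add: zero_prod_def)
  then have "sig R (N12 n) n + sig R (N12 n) n = 0" "rho R n (N12 n) + rho R n (N12 n) = 0"
    by (simp_all add: gm_jordan_def zero_prod_def \<psi>_N_block algebra_simps)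
  then show "sig R (N12 n) n = 0" "rho R n (N12 n) = 0"
    using A_no_2_torsion[of "sig R (N12 n) n"] B_no_2_torsion[of "rho R n (N12 n)"] by simp_all
qed

lemma orthogonal_pair_M:
  "gm_jordan R (\<psi> (a, actAM R a m, 0, 0)) (0, - actMB R m b, 0, b)
     + gm_jordan R (a, actAM R a m, 0, 0) (\<psi> (0, - actMB R m b, 0, b)) = 0"
  by (rule orthogonal_pair) (simp_all add: zero_prod_def)

lemma orthogonal_pair_N:
  "gm_jordan R (\<psi> (a, 0, actNA R n a, 0)) (0, 0, - actBN R b n, b)
     + gm_jordan R (a, 0, actNA R n a, 0) (\<psi> (0, 0, - actBN R b n, b)) = 0"
  by (rule orthogonal_pair) (simp_all add: zero_prod_def)

lemma M11_eq_0[simp]: "M11 m = 0"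
proof -
  have "- (M11 m + M11 m) = fst (gm_jordan R (\<psi> (1, m, 0, 0)) (0, - m, 0, 1)
      + gm_jordan R (1, m, 0, 0) (\<psi> (0, - m, 0, 1)))"
    by (simp add: gm_jordan_def \<psi>_entries algebra_simps)
  also have "\<dots> = 0"
    using orthogonal_pair_M[of 1 m 1] by simp
  finally have "M11 m + M11 m = 0"
    by (simp only: neg_equal_0_iff_equal)
  then show ?thesis
    using A_no_2_torsion by blast
qed

lemma M22_eq_0[simp]: "M22 m = 0"
proof -
  have "M22 m + M22 m = 0"
    using orthogonal_pair_M[of 1 m 1] by (simp add: gm_jordan_def zero_prod_def \<psi>_entries algebra_simps)
  then show ?thesis
    using B_no_2_torsion by blast
qed

lemma N11_eq_0[simp]: "N11 n = 0"
proof -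
  have "- (N11 n + N11 n) = fst (gm_jordan R (\<psi> (1, 0, n, 0)) (0, 0, - n, 1)
      + gm_jordan R (1, 0, n, 0) (\<psi> (0, 0, - n, 1)))"
    by (simp add: gm_jordan_def \<psi>_entries algebra_simps)
  also have "\<dots> = 0"
    using orthogonal_pair_N[of 1 n 1] by simp
  finally have "N11 n + N11 n = 0"
    by (simp only: neg_equal_0_iff_equal)
  then show ?thesis
    using A_no_2_torsion by blast
qed

lemma N22_eq_0[simp]: "N22 n = 0"
proof -
  have "N22 n + N22 n = 0"
    using orthogonal_pair_N[of 1 n 1] by (simp add: gm_jordan_def zero_prod_def \<psi>_entries algebra_simps)
  then show ?thesis
    using B_no_2_torsion by blast
qed

lemma orthogonal_pair_M_entries:
  "actMB R (M12 (actAM R a m)) b + actMB R (actAM R a m) (B22 b)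
     = actMB R (actAM R (A11 a) m) b + actAM R a (M12 (actMB R m b))"
  "actBN R b (M21 (actAM R a m)) = actNA R (M21 (actMB R m b)) a"
  using orthogonal_pair_M[of a m b] by (simp_all add: gm_jordan_def zero_prod_def \<psi>_entries algebra_simps)

lemma orthogonal_pair_N_entries:
  "actBN R b (N21 (actNA R n a)) + actBN R (B22 b) (actNA R n a)
     = actNA R (actBN R b n) (A11 a) + actNA R (N21 (actBN R b n)) a"
  "actMB R (N12 (actNA R n a)) b = actAM R a (N12 (actBN R b n))"
  using orthogonal_pair_N[of a n b] by (simp_all add: gm_jordan_def zero_prod_def \<psi>_entries algebra_simps)

lemma M12_AM: "M12 (actAM R a m) = actAM R (A11 a) m + actAM R a (M12 m) - actMB R (actAM R a m) d2"
  using orthogonal_pair_M_entries(1)[where b=1] by (simp add: Q_entries algebra_simps)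
lemma M12_MB: "M12 (actMB R m b) = actMB R (M12 m) b + actMB R m (B22 b) - actMB R (actAM R d1 m) b"
  using orthogonal_pair_M_entries(1)[where a=1] by (simp add: P_entries algebra_simps)
lemma M21_AM: "M21 (actAM R a m) = actNA R (M21 m) a"
  using orthogonal_pair_M_entries(2)[where b=1] by simp
lemma M21_MB: "M21 (actMB R m b) = actBN R b (M21 m)"
  using orthogonal_pair_M_entries(2)[where a=1] by simp
lemma N12_NA: "N12 (actNA R n a) = actAM R a (N12 n)"
  using orthogonal_pair_N_entries(2)[where b=1] by simp
lemma N12_BN: "N12 (actBN R b n) = actMB R (N12 n) b"
  using orthogonal_pair_N_entries(2)[where a=1] by simp
lemma N21_NA: "N21 (actNA R n a) = actNA R (N21 n) a + actNA R n (A11 a) - actNA R (actBN R d2 n) a"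
  using orthogonal_pair_N_entries(1)[where b=1] by (simp add: Q_entries algebra_simps)
lemma N21_BN: "N21 (actBN R b n) = actBN R b (N21 n) + actBN R (B22 b) n - actNA R (actBN R b n) d1"
  using orthogonal_pair_N_entries(1)[where a=1] by (simp add: P_entries algebra_simps)

lemma d1_AM: "actAM R d1 m = actMB R m d2"
  using orthogonal_pair_M_entries(1)[where a=1 and b=1] by (simp add: P_entries Q_entries)
lemma d1_NA: "actNA R n d1 = actBN R d2 n"
  using orthogonal_pair_N_entries(1)[where a=1 and b=1] by (simp add: P_entries Q_entries)

lemma d1_commute: "d1 * a = a * d1"
proof -
  have "actAM R (d1 * a - a * d1) m = 0" for m by (simp add: d1_AM)
  then show ?thesis using AM_faithful by (metis eq_iff_diff_eq_0)
qed

lemma d2_commute: "d2 * b = b * d2"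
proof -
  have "actMB R m (d2 * b - b * d2) = 0" for m by (simp flip: d1_AM)
  then show ?thesis using MB_faithful by (metis eq_iff_diff_eq_0)
qed

lemma diagonal_central: "gm_mult R (d1,0,0,d2) X = gm_mult R X (d1,0,0,d2)"
  by (cases X) (simp add: d1_commute d2_commute d1_AM d1_NA)

end

locale vanishing_P_map = diagonal_P_map R \<psi> 0 0
  for R :: "('a::ring_1, 'm::ab_group_add, 'n::ab_group_add, 'b::ring_1) gmr"
  and \<psi> :: "'a \<times> 'm \<times> 'n \<times> 'b \<Rightarrow> 'a \<times> 'm \<times> 'n \<times> 'b"
begin

lemmas [simp] = M12_AM M12_MB M21_AM M21_MB N12_NA N12_BN N21_NA N21_BN

lemma A11_mult[simp]: "A11 (a * a') = A11 a * a' + a * A11 a'"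
proof -
  have "actAM R (A11 (a * a') - (A11 a * a' + a * A11 a')) m = 0" for m
    using M12_AM[of "a * a'" m] by (simp add: algebra_simps)
  then show ?thesis using AM_faithful by (metis eq_iff_diff_eq_0)
qed

lemma B22_mult[simp]: "B22 (b * b') = B22 b * b' + b * B22 b'"
proof -
  have "actMB R m (B22 (b * b') - (B22 b * b' + b * B22 b')) = 0" for m
    using M12_MB[of m "b * b'"] by (simp add: algebra_simps)
  then show ?thesis using MB_faithful by (metis eq_iff_diff_eq_0)
qed

lemma \<psi>_one: "\<psi> gm_one = 0"
  by (simp add: gm_one_def \<psi>_entries P_entries Q_entries zero_prod_def)

lemma idempotent_corner_entries:
  assumes "gm_mult R E E = E"
  shows "fst (\<psi> E) = fst (gm_jordan R (\<psi> E) E)"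
    and "snd (snd (snd (\<psi> E))) = snd (snd (snd (gm_jordan R (\<psi> E) E)))"
proof -
  have twice: "\<psi> E + \<psi> E = gm_jordan R (\<psi> E) E + gm_jordan R (\<psi> E) E"
    using condition_P_idempotent[OF additive condition_P \<psi>_one assms] .
  show "fst (\<psi> E) = fst (gm_jordan R (\<psi> E) E)"
    using A_no_2_torsion[of "fst (\<psi> E) - fst (gm_jordan R (\<psi> E) E)"] arg_cong[OF twice, of fst]
    by (simp add: algebra_simps)
  show "snd (snd (snd (\<psi> E))) = snd (snd (snd (gm_jordan R (\<psi> E) E)))"
    using B_no_2_torsion[of "snd (snd (snd (\<psi> E))) - snd (snd (snd (gm_jordan R (\<psi> E) E)))"]
      arg_cong[OF twice, of "\<lambda>X. snd (snd (snd X))"]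
    by (simp add: algebra_simps)
qed

definition "sig_defect m n = A11 (sig R m n) - sig R (M12 m) n - sig R m (N21 n)"
definition "rho_defect n m = B22 (rho R n m) - rho R (N21 n) m - rho R n (M12 m)"

sublocale sig_defect_left: additive "\<lambda>m. sig_defect m n" for n
  by unfold_locales (simp add: sig_defect_def A11.add M12.add)
sublocale sig_defect_right: additive "sig_defect m" for m
  by unfold_locales (simp add: sig_defect_def A11.add N21.add)
sublocale rho_defect_left: additive "\<lambda>n. rho_defect n m" for m
  by unfold_locales (simp add: rho_defect_def B22.add N21.add)
sublocale rho_defect_right: additive "rho_defect n" for n
  by unfold_locales (simp add: rho_defect_def B22.add M12.add)

lemma idempotent_defects_eq_0:
  assumes E: "gm_mult R (a,m,n,b) (a,m,n,b) = (a,m,n,b)"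
  shows "sig_defect m n = 0" "rho_defect n m = 0"
proof -
  have "a = a * a + sig R m n" "b = rho R n m + b * b"
    using E by simp_all
  then have A: "A11 a = A11 a * a + a * A11 a + A11 (sig R m n)"
    and B: "B22 b = B22 (rho R n m) + B22 b * b + b * B22 b"
    by (metis A11.add A11_mult add.commute, metis B22.add B22_mult add.assoc)
  have A': "A11 a = A11 a * a + sig R (M12 m) n + a * A11 a + sig R m (N21 n)"
    and B': "B22 b = rho R (N21 n) m + B22 b * b + rho R n (M12 m) + b * B22 b"
    using idempotent_corner_entries[OF E] by (simp_all add: \<psi>_entries gm_jordan_def algebra_simps)
  show "sig_defect m n = 0"
    using trans[OF A[symmetric] A'] unfolding sig_defect_def by (simp add: algebra_simps)
  show "rho_defect n m = 0"
    using trans[OF B[symmetric] B'] unfolding rho_defect_def by (simp add: algebra_simps)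
qed

text \<open>The idempotents gm_mult_idempotent for m and for -m make the defect vanish at n - k and at
  n + k with k = (n m) n; by biadditivity the difference of the two is twice the defect at (m, n).\<close>

lemma sig_defect_eq_0: "sig_defect m n = 0"
proof -
  let ?k = "actBN R (rho R n m) n"
  have "sig_defect m (n - ?k) = 0"
    by (rule idempotent_defects_eq_0(1)[OF gm_mult_idempotent])
  moreover have "sig_defect (- m) (n + ?k) = 0"
    using idempotent_defects_eq_0(1)[OF gm_mult_idempotent[of "- m" n]] by simp
  moreover have "sig_defect m n + sig_defect m n = sig_defect m (n - ?k) - sig_defect (- m) (n + ?k)"
    by (simp add: sig_defect_left.minus sig_defect_right.add sig_defect_right.diff)
  ultimately have "sig_defect m n + sig_defect m n = 0"
    by simp
  then show ?thesis
    using A_no_2_torsion by blast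
qed

lemma rho_defect_eq_0: "rho_defect n m = 0"
proof -
  let ?k = "actBN R (rho R n m) n"
  have "rho_defect (n - ?k) m = 0"
    by (rule idempotent_defects_eq_0(2)[OF gm_mult_idempotent])
  moreover have "rho_defect (n + ?k) (- m) = 0"
    using idempotent_defects_eq_0(2)[OF gm_mult_idempotent[of "- m" n]] by simp
  moreover have "rho_defect n m + rho_defect n m = rho_defect (n - ?k) m - rho_defect (n + ?k) (- m)"
    by (simp add: rho_defect_right.minus rho_defect_left.add rho_defect_left.diff)
  ultimately have "rho_defect n m + rho_defect n m = 0"
    by simp
  then show ?thesis
    using B_no_2_torsion by blast
qed

lemma A11_sig[simp]: "A11 (sig R m n) = sig R (M12 m) n + sig R m (N21 n)"
  using sig_defect_eq_0[of m n] unfolding sig_defect_def by (simp add: algebra_simps)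

lemma B22_rho[simp]: "B22 (rho R n m) = rho R (N21 n) m + rho R n (M12 m)"
  using rho_defect_eq_0[of n m] unfolding rho_defect_def by (simp add: algebra_simps)

lemma is_jordan_derivation: "jordan_derivation R \<psi>"
  unfolding jordan_derivation_def
proof (intro conjI allI)
  fix X :: "'a \<times> 'm \<times> 'n \<times> 'b"
  obtain a m n b where "X = (a,m,n,b)" by (cases X)
  then show "\<psi> (gm_mult R X X) = gm_mult R (\<psi> X) X + gm_mult R X (\<psi> X)"
    by (simp add: \<psi>_entries algebra_simps A11.add M12.add M21.add N12.add N21.add B22.add)
qed (fact additive)

end

context diagonal_P_map
begin

lemma jordan_derivation_diff_central: "jordan_derivation R (\<lambda>X. \<psi> X - gm_mult R (d1,0,0,d2) X)"
proof -
  have "vanishing_P_map R (\<lambda>X. \<psi> X - gm_mult R (d1,0,0,d2) X)"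
  proof unfold_locales
    show "additive_map (\<lambda>X. \<psi> X - gm_mult R (d1,0,0,d2) X)"
      by (rule additive_map_diff[OF additive]) (simp add: additive_map_def gm_mult_distribs)
    show "condition_P R (\<lambda>X. \<psi> X - gm_mult R (d1,0,0,d2) X)"
      by (rule condition_P_diff[OF condition_P condition_P_central[OF diagonal_central]])
  qed (simp_all add: \<psi>_P \<psi>_Q torsion_free_A torsion_free_B zero_prod_def)
  then show ?thesis by (rule vanishing_P_map.is_jordan_derivation)
qed

end

context gm_ring
begin

lemma jordan_multiplier_decomposition:
  assumes "additive_map \<phi>" "condition_P R \<phi>"
    and "two_torsion_free TYPE('a)" "two_torsion_free TYPE('b)"
  obtains \<delta> \<eta> where "jordan_derivation R \<delta>" "multiplier R \<eta>" "\<And>X. \<phi> X = \<delta> X + \<eta> X"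
proof -
  obtain T p q where
    P: "\<phi> (1,0,0,0) - inner_derivation T (1,0,0,0) = (p,0,0,0)" and
    Q: "\<phi> (0,0,0,1) - inner_derivation T (0,0,0,1) = (0,0,0,q)"
    using exists_inner_normalization[OF assms(2-4)] .
  define \<psi> where "\<psi> X = \<phi> X - inner_derivation T X" for X
  interpret diagonal_P_map R \<psi> p q
  proof unfold_locales
    show "additive_map \<psi>"
      unfolding \<psi>_def by (rule additive_map_diff[OF assms(1) additive_map_inner_derivation])
    show "condition_P R \<psi>"
      unfolding \<psi>_def by (rule condition_P_diff[OF assms(2) condition_P_inner_derivation])
  qed (use assms P Q in \<open>simp_all add: \<psi>_def\<close>)
  show ?thesis
  proof (rule that)
    show "jordan_derivation R (\<lambda>X. (\<psi> X - gm_mult R (p,0,0,q) X) + inner_derivation T X)"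
      by (rule jordan_derivation_add[OF jordan_derivation_diff_central
            jordan_derivation_inner_derivation])
    show "multiplier R (gm_mult R (p,0,0,q))"
      by (rule multiplier_central[OF diagonal_central])
  qed (simp add: \<psi>_def)
qed

lemma jordan_derivation_if_vanishes_at_one:
  assumes "jordan_derivation R \<delta>" "multiplier R \<eta>" "\<And>X. \<phi> X = \<delta> X + \<eta> X"
    and "\<phi> gm_one = 0"
  shows "jordan_derivation R \<phi>"
proof -
  have "\<eta> gm_one = 0"
    using assms(3)[of gm_one] assms(4) jordan_derivation_one[OF assms(1)] by simp
  then have "\<phi> = \<delta>"
    using assms(3) multiplier_eq_0[OF assms(2)] by auto
  with assms(1) show ?thesis by simp
qed

end

theorem theorem2p1:
  fixes R :: "('a::ring_1, 'm::ab_group_add, 'n::ab_group_add, 'b::ring_1) gmr"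
    and \<phi> :: "'a \<times> 'm \<times> 'n \<times> 'b \<Rightarrow> 'a \<times> 'm \<times> 'n \<times> 'b"
  assumes "gen_matrix_ring R"
    and "two_torsion_free TYPE('a)"
    and "two_torsion_free TYPE('b)"
    and "additive_map \<phi>"
    and "condition_P R \<phi>"
  shows "(\<exists>\<delta> \<eta>. jordan_derivation R \<delta> \<and> multiplier R \<eta> \<and> (\<forall>X. \<phi> X = \<delta> X + \<eta> X))
         \<and> (\<phi> gm_one = 0 \<longrightarrow> jordan_derivation R \<phi>)"
proof -
  interpret gm_ring R by (rule gm_ring.intro) (fact assms(1))
  obtain \<delta> \<eta> where "jordan_derivation R \<delta>" "multiplier R \<eta>" "\<And>X. \<phi> X = \<delta> X + \<eta> X"
    using jordan_multiplier_decomposition[OF assms(4,5,2,3)] by blast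
  then show ?thesis
    using jordan_derivation_if_vanishes_at_one by blast
qed

end
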